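(* Let $a\in\mathbb{R}$ and $\gamma>0$ be such that \[ P=\tfrac12(1-\gamma^2a^2)+\sqrt{\gamma^2(-1+\gamma^2)+(\gamma^2a^2-1)^2/4} \] is a real number with $P+\gamma^2-1\neq 0$, and set $\hat a=\frac{aP}{P+\gamma^2-1}$, $\hat g=\frac{\gamma^2a}{P+\gamma^2-1}$. Given a real measurement sequence $y$, for $i\in\{-1,1\}$ define \[ \hat x_i(t+1)=\hat a\hat x_i(t)+iu(t)+\hat gy(t),\quad \hat x_i(0)=0, \] \[ l_i(t+1)=l_i(t)-P\hat x_i(t)^2-\gamma^2y(t)^2+\frac{(P\hat x_i(t)+\gamma^2y(t))^2}{P+\gamma^2-1},\quad l_i(0)=0, \] where the control is \[ u(t)=\begin{cases}-(\hat a\hat x_1(t)+\hat gy(t)) & \text{if } l_1(t+1)\ge l_{-1}(t+1),\\ \hat a\hat x_{-1}(t)+\hat gy(t) & \text{if } l_1(t+1)<l_{-1}(t+1).\end{cases} \] Let $\hat x(t+1)=\hat a\hat x(t)+2\hat gy(t)$, $\hat x(0)=0$. Then for all $t\ge 0$: 1. $\hat x_1(t)=0$ and $\hat x_{-1}(t)=\hat x(t)$ if $l_1(t)\ge l_{-1}(t)$, while $\hat x_1(t)=\hat x(t)$ and $\hat x_{-1}(t)=0$ if $l_1(t)<l_{-1}(t)$. 2. If $l_1(t)\ge l_{-1}(t)$ then \[ l_1(t+1)=l_1(t)-\gamma^2y(t)^2+\frac{(\gamma^2y(t))^2}{P+\gamma^2-1},\quad l_{-1}(t+1)=l_{-1}(t)-P\hat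 x(t)^2-\gamma^2y(t)^2+\frac{(P\hat x(t)+\gamma^2y(t))^2}{P+\gamma^2-1}, \] and if $l_1(t)<l_{-1}(t)$ then \[ l_1(t+1)=l_1(t)-P\hat x(t)^2-\gamma^2y(t)^2+\frac{(P\hat x(t)+\gamma^2y(t))^2}{P+\gamma^2-1},\quad l_{-1}(t+1)=l_{-1}(t)-\gamma^2y(t)^2+\frac{(\gamma^2y(t))^2}{P+\gamma^2-1}. \]
   Context: Note that $l_i(t+1)$ depends only on $\hat x_i(t)$ and $y(t)$, so the control $u(t)$ is well defined from $\hat x_{\pm1}(t)$ and $y(t)$. This is the setting of the scalar system $x(t+1)=ax(t)+bu(t)+w(t)$, $y(t)=x(t)+v(t)$ with unknown input sign $b\in\{-1,1\}$, where $\hat x_i,l_i$ are the observer and cumulative cost for the model $b=i$. *)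

theory Defs
  imports Complex_Main
begin

definition Pc :: "real \<Rightarrow> real \<Rightarrow> real" where
  "Pc a \<gamma> = (1 - \<gamma>^2 * a^2) / 2 + sqrt (\<gamma>^2 * (-1 + \<gamma>^2) + (\<gamma>^2 * a^2 - 1)^2 / 4)"

definition ahat :: "real \<Rightarrow> real \<Rightarrow> real" where
  "ahat a \<gamma> = a * Pc a \<gamma> / (Pc a \<gamma> + \<gamma>^2 - 1)"

definition ghat :: "real \<Rightarrow> real \<Rightarrow> real" where
  "ghat a \<gamma> = \<gamma>^2 * a / (Pc a \<gamma> + \<gamma>^2 - 1)"

text \<open>l(t+1) = l(t) + linc a gamma (xhat(t)) (y(t))\<close>
definition linc :: "real \<Rightarrow> real \<Rightarrow> real \<Rightarrow> real \<Rightarrow> real" where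
  "linc a \<gamma> x yt = - Pc a \<gamma> * x^2 - \<gamma>^2 * yt^2
      + (Pc a \<gamma> * x + \<gamma>^2 * yt)^2 / (Pc a \<gamma> + \<gamma>^2 - 1)"

text \<open>Joint state (xhat_1(t), xhat_{-1}(t), l_1(t), l_{-1}(t)) of the closed loop.
  The control u(t) is computed from l_1(t+1), l_{-1}(t+1), which depend only on
  xhat_i(t) and y(t).\<close>
fun obs :: "real \<Rightarrow> real \<Rightarrow> (nat \<Rightarrow> real) \<Rightarrow> nat \<Rightarrow> real \<times> real \<times> real \<times> real" where
  "obs a \<gamma> y 0 = (0, 0, 0, 0)"
| "obs a \<gamma> y (Suc t) =
     (let (x1, xm, l1, lm) = obs a \<gamma> y t;
          l1' = l1 + linc a \<gamma> x1 (y t);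
          lm' = lm + linc a \<gamma> xm (y t);
          u = (if l1' \<ge> lm' then - (ahat a \<gamma> * x1 + ghat a \<gamma> * y t)
               else ahat a \<gamma> * xm + ghat a \<gamma> * y t)
      in (ahat a \<gamma> * x1 + 1 * u + ghat a \<gamma> * y t,
          ahat a \<gamma> * xm + (-1) * u + ghat a \<gamma> * y t, l1', lm'))"

definition xh1 :: "real \<Rightarrow> real \<Rightarrow> (nat \<Rightarrow> real) \<Rightarrow> nat \<Rightarrow> real" where
  "xh1 a \<gamma> y t = fst (obs a \<gamma> y t)"
definition xhm1 :: "real \<Rightarrow> real \<Rightarrow> (nat \<Rightarrow> real) \<Rightarrow> nat \<Rightarrow> real" where
  "xhm1 a \<gamma> y t = fst (snd (obs a \<gamma> y t))"
definition l1 :: "real \<Rightarrow> real \<Rightarrow> (nat \<Rightarrow> real) \<Rightarrow> nat \<Rightarrow> real" where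
  "l1 a \<gamma> y t = fst (snd (snd (obs a \<gamma> y t)))"
definition lm1 :: "real \<Rightarrow> real \<Rightarrow> (nat \<Rightarrow> real) \<Rightarrow> nat \<Rightarrow> real" where
  "lm1 a \<gamma> y t = snd (snd (snd (obs a \<gamma> y t)))"

fun xhat :: "real \<Rightarrow> real \<Rightarrow> (nat \<Rightarrow> real) \<Rightarrow> nat \<Rightarrow> real" where
  "xhat a \<gamma> y 0 = 0"
| "xhat a \<gamma> y (Suc t) = ahat a \<gamma> * xhat a \<gamma> y t + 2 * ghat a \<gamma> * y t"

end

theory Submission
  imports Defs
begin

text \<open>The control always resets the observer of the currently preferred model to zero, while the
  sum of the two observers obeys the recursion of \<open>xhat\<close> whatever the control is, because the
  control enters the two observers with opposite signs. Hence the observer of the other model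
  equals \<open>xhat\<close>, and the cost updates follow by substituting \<open>0\<close> and \<open>xhat\<close> into \<open>linc\<close>.\<close>

lemma l1_Suc: "l1 a \<gamma> y (Suc t) = l1 a \<gamma> y t + linc a \<gamma> (xh1 a \<gamma> y t) (y t)"
  and lm1_Suc: "lm1 a \<gamma> y (Suc t) = lm1 a \<gamma> y t + linc a \<gamma> (xhm1 a \<gamma> y t) (y t)"
  by (cases "obs a \<gamma> y t"; simp add: xh1_def xhm1_def l1_def lm1_def Let_def)+

lemma xh1_Suc:
  "xh1 a \<gamma> y (Suc t) =
     (if lm1 a \<gamma> y (Suc t) \<le> l1 a \<gamma> y (Suc t) then 0
      else ahat a \<gamma> * (xh1 a \<gamma> y t + xhm1 a \<gamma> y t) + 2 * ghat a \<gamma> * y t)"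
  by (cases "obs a \<gamma> y t")
    (simp add: xh1_def xhm1_def l1_def lm1_def Let_def algebra_simps)

lemma xhm1_Suc:
  "xhm1 a \<gamma> y (Suc t) =
     (if lm1 a \<gamma> y (Suc t) \<le> l1 a \<gamma> y (Suc t)
      then ahat a \<gamma> * (xh1 a \<gamma> y t + xhm1 a \<gamma> y t) + 2 * ghat a \<gamma> * y t
      else 0)"
  by (cases "obs a \<gamma> y t")
    (simp add: xh1_def xhm1_def l1_def lm1_def Let_def algebra_simps)

lemma xh1_plus_xhm1: "xh1 a \<gamma> y t + xhm1 a \<gamma> y t = xhat a \<gamma> y t"
proof (induction t)
  case 0
  show ?case by (simp add: xh1_def xhm1_def)
next
  case (Suc t)
  then show ?case by (simp add: xh1_Suc xhm1_Suc)
qed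

lemma xh1_eq_0_if_l1_ge: "lm1 a \<gamma> y t \<le> l1 a \<gamma> y t \<Longrightarrow> xh1 a \<gamma> y t = 0"
  by (cases t) (simp add: xh1_def, simp add: xh1_Suc)

lemma xhm1_eq_0_if_l1_less: "l1 a \<gamma> y t < lm1 a \<gamma> y t \<Longrightarrow> xhm1 a \<gamma> y t = 0"
  by (cases t) (simp add: l1_def lm1_def, simp add: xhm1_Suc)

theorem proposition4:
  fixes a \<gamma> :: real and y :: "nat \<Rightarrow> real" and t :: nat
  assumes "\<gamma> > 0"
    and "\<gamma>^2 * (-1 + \<gamma>^2) + (\<gamma>^2 * a^2 - 1)^2 / 4 \<ge> 0"
    and "Pc a \<gamma> + \<gamma>^2 - 1 \<noteq> 0"
  shows "(l1 a \<gamma> y t \<ge> lm1 a \<gamma> y t \<longrightarrow>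
            xh1 a \<gamma> y t = 0 \<and> xhm1 a \<gamma> y t = xhat a \<gamma> y t) \<and>
         (l1 a \<gamma> y t < lm1 a \<gamma> y t \<longrightarrow>
            xh1 a \<gamma> y t = xhat a \<gamma> y t \<and> xhm1 a \<gamma> y t = 0) \<and>
         (l1 a \<gamma> y t \<ge> lm1 a \<gamma> y t \<longrightarrow>
            l1 a \<gamma> y (Suc t) = l1 a \<gamma> y t - \<gamma>^2 * (y t)^2
               + (\<gamma>^2 * y t)^2 / (Pc a \<gamma> + \<gamma>^2 - 1) \<and>
            lm1 a \<gamma> y (Suc t) = lm1 a \<gamma> y t - Pc a \<gamma> * (xhat a \<gamma> y t)^2 - \<gamma>^2 * (y t)^2
               + (Pc a \<gamma> * xhat a \<gamma> y t + \<gamma>^2 * y t)^2 / (Pc a \<gamma> + \<gamma>^2 - 1)) \<and>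
         (l1 a \<gamma> y t < lm1 a \<gamma> y t \<longrightarrow>
            l1 a \<gamma> y (Suc t) = l1 a \<gamma> y t - Pc a \<gamma> * (xhat a \<gamma> y t)^2 - \<gamma>^2 * (y t)^2
               + (Pc a \<gamma> * xhat a \<gamma> y t + \<gamma>^2 * y t)^2 / (Pc a \<gamma> + \<gamma>^2 - 1) \<and>
            lm1 a \<gamma> y (Suc t) = lm1 a \<gamma> y t - \<gamma>^2 * (y t)^2
               + (\<gamma>^2 * y t)^2 / (Pc a \<gamma> + \<gamma>^2 - 1))"
proof (cases "lm1 a \<gamma> y t \<le> l1 a \<gamma> y t")
  case True
  then have "xh1 a \<gamma> y t = 0" and "xhm1 a \<gamma> y t = xhat a \<gamma> y t"
    using xh1_eq_0_if_l1_ge xh1_plus_xhm1 by (metis add_0)+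
  with True show ?thesis by (simp add: l1_Suc lm1_Suc linc_def)
next
  case False
  then have "xhm1 a \<gamma> y t = 0" and "xh1 a \<gamma> y t = xhat a \<gamma> y t"
    using xhm1_eq_0_if_l1_less xh1_plus_xhm1 by (metis not_le add_0_right)+
  with False show ?thesis by (simp add: l1_Suc lm1_Suc linc_def)
qed

end
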